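(* Let $\mathcal H_{PT}$ and $\mathcal H_{CK}$ be the Hopf algebras described below and define $\mathrm{sk}$ on reduced plane trees by $\mathrm{sk}(|)=\emptyset$ for the single-leaf tree $|$ and, if the root of $t$ has children subtrees $t_1,\dots,t_n$ ($n\ge2$), $\mathrm{sk}(t)=B^+_{n-1}\big(\mathrm{sk}(t_1)\cdots\mathrm{sk}(t_n)\big)$. Then the algebra morphism $\mathrm{sk}:\mathcal H_{PT}\to\mathcal H_{CK}$ extending this map is a morphism of Hopf algebras.
   Context: A reduced plane tree is a rooted plane tree in which every internal vertex has at least two children. For a tree $t_0$ with $n$ leaves, $t_0\circ(t_1,\dots,t_n)$ is obtained by replacing the leaves of $t_0$, from left to right, by the trees $t_1,\dots,t_n$. $\mathcal H_{PT}$ is the free unital associative algebra over $\mathbb C$ generated by the reduced plane trees with at least two leaves, the single-leaf tree $|$ being identified with the unit (so a basis is given by plane forests, i.e. words of such trees), with coproduct defined on trees by $$\Delta(t)=\sum_{t=t_0\circ(t_1,\dots,t_n)} t_0\otimes (t_1\cdot t_2\cdots t_n),$$ the sum over all ways to write $t$ as such a composition ($t_0$ with $n$ leaves, $t_i$ arbitrary reduced plane trees including $|$), and extended as an algebra morphism. $\mathcal H_{CK}$ is the commutative polynomial algebra over $\mathbb C$ on the set of (non-plane) rooted trees whose vertices are decorated by positive integers; its monomials are forests and its unit is the empty forest $\emptyset$. For $n\ge1$ and a forest $F$, $B_n^+(F)$ is the rooted tree with a new root decorated by $n$ joined to the roots of the trees of $F$ ($B_n^+(\emptyset)$ is a single vertex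 decorated $n$). The coproduct of $\mathcal H_{CK}$ is the algebra morphism defined by $\Delta(\emptyset)=\emptyset\otimes\emptyset$ and $\Delta(B_n^+(F))=\emptyset\otimes B_n^+(F)+(B_n^+\otimes\mathrm{Id})\circ\Delta(F)$. *)

theory Defs
  imports Complex_Main "HOL-Library.Multiset" "HOL-Library.Poly_Mapping" "HOL-Library.Product_Plus"
begin

datatype ptree = PLeaf | PNode "ptree list"

fun reduced :: "ptree \<Rightarrow> bool" where
  "reduced PLeaf = True"
| "reduced (PNode cs) = (2 \<le> length cs \<and> (\<forall>c\<in>set cs. reduced c))"

fun nleaves :: "ptree \<Rightarrow> nat" where
  "nleaves PLeaf = 1"
| "nleaves (PNode cs) = sum_list (map nleaves cs)"

text \<open>graft t0 ts = t0 o (t_1,...,t_n): replace the leaves of t0, from left to right,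
  by the trees in ts (meaningful when length ts = nleaves t0).\<close>
fun graft :: "ptree \<Rightarrow> ptree list \<Rightarrow> ptree"
and graft_list :: "ptree list \<Rightarrow> ptree list \<Rightarrow> ptree list" where
  "graft PLeaf ts = hd ts"
| "graft (PNode cs) ts = PNode (graft_list cs ts)"
| "graft_list [] ts = []"
| "graft_list (c # cs) ts = graft c (take (nleaves c) ts) # graft_list cs (drop (nleaves c) ts)"

text \<open>Basis of H_PT: plane forests = words of reduced trees with at least two leaves.\<close>
definition pforest :: "ptree list \<Rightarrow> bool" where
  "pforest w \<longleftrightarrow> (\<forall>t\<in>set w. reduced t \<and> t \<noteq> PLeaf)"

definition HPT :: "(ptree list \<Rightarrow>\<^sub>0 complex) set" where
  "HPT = {x. \<forall>w\<in>Poly_Mapping.keys x. pforest w}"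

text \<open>A reduced tree seen as an element of H_PT (the single leaf is the unit, i.e. the empty word).\<close>
fun forest_of :: "ptree \<Rightarrow> ptree list" where
  "forest_of PLeaf = []"
| "forest_of (PNode cs) = [PNode cs]"

definition mulPT :: "(ptree list \<Rightarrow>\<^sub>0 complex) \<Rightarrow> (ptree list \<Rightarrow>\<^sub>0 complex) \<Rightarrow> (ptree list \<Rightarrow>\<^sub>0 complex)" where
  "mulPT x y = (\<Sum>u\<in>Poly_Mapping.keys x. \<Sum>v\<in>Poly_Mapping.keys y. Poly_Mapping.single (u @ v) (Poly_Mapping.lookup x u * Poly_Mapping.lookup y v))"

text \<open>Product of H_PT \<otimes> H_PT, with basis pairs of plane forests.\<close>
definition mulPT2 :: "(ptree list \<times> ptree list \<Rightarrow>\<^sub>0 complex) \<Rightarrow> (ptree list \<times> ptree list \<Rightarrow>\<^sub>0 complex)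
    \<Rightarrow> (ptree list \<times> ptree list \<Rightarrow>\<^sub>0 complex)" where
  "mulPT2 X Y = (\<Sum>p\<in>Poly_Mapping.keys X. \<Sum>q\<in>Poly_Mapping.keys Y.
      Poly_Mapping.single (fst p @ fst q, snd p @ snd q) (Poly_Mapping.lookup X p * Poly_Mapping.lookup Y q))"

definition decomps :: "ptree \<Rightarrow> (ptree \<times> ptree list) set" where
  "decomps t = {(t0, ts). reduced t0 \<and> (\<forall>s\<in>set ts. reduced s) \<and>
                          length ts = nleaves t0 \<and> graft t0 ts = t}"

definition DeltaPT_tree :: "ptree \<Rightarrow> (ptree list \<times> ptree list \<Rightarrow>\<^sub>0 complex)" where
  "DeltaPT_tree t = (\<Sum>d\<in>decomps t.
      Poly_Mapping.single (forest_of (fst d), concat (map forest_of (snd d))) 1)"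

definition DeltaPT_forest :: "ptree list \<Rightarrow> (ptree list \<times> ptree list \<Rightarrow>\<^sub>0 complex)" where
  "DeltaPT_forest w = foldr (\<lambda>t acc. mulPT2 (DeltaPT_tree t) acc) w (Poly_Mapping.single ([], []) 1)"

definition DeltaPT :: "(ptree list \<Rightarrow>\<^sub>0 complex) \<Rightarrow> (ptree list \<times> ptree list \<Rightarrow>\<^sub>0 complex)" where
  "DeltaPT x = (\<Sum>w\<in>Poly_Mapping.keys x. Poly_Mapping.map (\<lambda>c. Poly_Mapping.lookup x w * c) (DeltaPT_forest w))"

definition epsPT :: "(ptree list \<Rightarrow>\<^sub>0 complex) \<Rightarrow> complex" where
  "epsPT x = Poly_Mapping.lookup x []"

text \<open>Non-plane rooted trees with vertices decorated by naturals; children form a multiset.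
  Forests are multisets of trees (monomials of the polynomial algebra).\<close>
datatype dtree = Bplus nat "dtree multiset"

text \<open>H_CK = polynomial algebra on trees = finitely supported functions on forests with
  convolution product; H_CK \<otimes> H_CK has basis pairs of forests.\<close>
type_synonym HCK = "dtree multiset \<Rightarrow>\<^sub>0 complex"
type_synonym HCK2 = "(dtree multiset \<times> dtree multiset) \<Rightarrow>\<^sub>0 complex"

definition Bplus_left :: "nat \<Rightarrow> HCK2 \<Rightarrow> HCK2" where
  "Bplus_left n X = (\<Sum>p\<in>Poly_Mapping.keys X. Poly_Mapping.single ({#Bplus n (fst p)#}, snd p) (Poly_Mapping.lookup X p))"

function DeltaCK_tree :: "dtree \<Rightarrow> HCK2" where
  "DeltaCK_tree (Bplus n F) =
     Poly_Mapping.single ({#}, {#Bplus n F#}) 1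
     + Bplus_left n (prod_mset (image_mset DeltaCK_tree F))"
  by pat_completeness auto
termination
proof (relation "measure size")
  fix n and F :: "dtree multiset" and z assume "z \<in># F"
  then show "(z, Bplus n F) \<in> measure size"
    by (induct F) (auto simp: size_multiset_overloaded_def)
qed simp

definition DeltaCK_forest :: "dtree multiset \<Rightarrow> HCK2" where
  "DeltaCK_forest F = prod_mset (image_mset DeltaCK_tree F)"

definition DeltaCK :: "HCK \<Rightarrow> HCK2" where
  "DeltaCK y = (\<Sum>F\<in>Poly_Mapping.keys y. Poly_Mapping.map (\<lambda>c. Poly_Mapping.lookup y F * c) (DeltaCK_forest F))"

definition epsCK :: "HCK \<Rightarrow> complex" where
  "epsCK y = Poly_Mapping.lookup y {#}"

fun sk_tree :: "ptree \<Rightarrow> dtree multiset" where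
  "sk_tree PLeaf = {#}"
| "sk_tree (PNode ts) = {#Bplus (length ts - 1) (sum_list (map sk_tree ts))#}"

definition sk_forest :: "ptree list \<Rightarrow> dtree multiset" where
  "sk_forest w = sum_list (map sk_tree w)"

definition sk :: "(ptree list \<Rightarrow>\<^sub>0 complex) \<Rightarrow> HCK" where
  "sk x = (\<Sum>w\<in>Poly_Mapping.keys x. Poly_Mapping.single (sk_forest w) (Poly_Mapping.lookup x w))"

definition sk2 :: "(ptree list \<times> ptree list \<Rightarrow>\<^sub>0 complex) \<Rightarrow> HCK2" where
  "sk2 X = (\<Sum>p\<in>Poly_Mapping.keys X.
      Poly_Mapping.single (sk_forest (fst p), sk_forest (snd p)) (Poly_Mapping.lookup X p))"

end

theory Submission imports Defs begin

text \<open>Every decomposition \<open>t = t\<^sub>0 \<circ> (t\<^sub>1, \<dots>, t\<^sub>n)\<close> of a tree \<open>t\<close> with root children \<open>c\<^sub>1, \<dots>, c\<^sub>k\<close>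
  is either the trivial one \<open>| \<circ> (t)\<close>, or arises from decompositions \<open>c\<^sub>i = s\<^sub>i \<circ> (\<dots>)\<close> of the
  children by taking for \<open>t\<^sub>0\<close> the root with children \<open>s\<^sub>1, \<dots>, s\<^sub>k\<close> and concatenating the
  lists of grafted trees; this correspondence is bijective. Grafting does not change the arity
  of the root, so \<open>sk(t\<^sub>0) = B\<^sup>+\<^sub>k\<^sub>-\<^sub>1(sk(s\<^sub>1)\<cdots>sk(s\<^sub>k))\<close>, and applying \<open>sk \<otimes> sk\<close> to the coproduct
  of \<open>t\<close> reproduces the recursion \<open>\<Delta>(B\<^sup>+(F)) = \<emptyset> \<otimes> B\<^sup>+(F) + (B\<^sup>+ \<otimes> Id) \<Delta>(F)\<close> of \<open>H_CK\<close>.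
  Induction on \<open>t\<close> gives compatibility with the coproducts. Multiplicativity and the counit are
  immediate, since \<open>sk\<close> turns concatenation of words into union of forests and only the empty
  word is sent to the empty forest.\<close>

section \<open>Linear extensions on finitely supported functions\<close>

text \<open>\<open>push_keys f\<close> is the linear extension of a map \<open>f\<close> between bases, \<open>pm_extend g\<close> that of a map
  \<open>g\<close> from a basis to vectors; \<open>sk\<close>, \<open>sk2\<close> and \<open>Bplus_left\<close> are of the first kind, the
  coproducts \<open>DeltaPT\<close> and \<open>DeltaCK\<close> of the second.\<close>

definition push_keys :: "('a \<Rightarrow> 'b) \<Rightarrow> ('a \<Rightarrow>\<^sub>0 'c::comm_monoid_add) \<Rightarrow> 'b \<Rightarrow>\<^sub>0 'c" where
  "push_keys f X = (\<Sum>p\<in>Poly_Mapping.keys X. Poly_Mapping.single (f p) (Poly_Mapping.lookup X p))"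

lemma push_keys_superset:
  assumes "finite S" "Poly_Mapping.keys X \<subseteq> S"
  shows "push_keys f X = (\<Sum>p\<in>S. Poly_Mapping.single (f p) (Poly_Mapping.lookup X p))"
  unfolding push_keys_def using assms
  by (intro sum.mono_neutral_left) (auto simp: in_keys_iff)

lemma push_keys_zero [simp]: "push_keys f 0 = 0"
  by (simp add: push_keys_def)

lemma push_keys_single [simp]: "push_keys f (Poly_Mapping.single k c) = Poly_Mapping.single (f k) c"
  by (simp add: push_keys_def)

lemma push_keys_add: "push_keys f (X + Y) = push_keys f X + push_keys f Y"
proof -
  let ?S = "Poly_Mapping.keys X \<union> Poly_Mapping.keys Y"
  have "push_keys f (X + Y) = (\<Sum>p\<in>?S. Poly_Mapping.single (f p) (Poly_Mapping.lookup (X + Y) p))"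
    by (rule push_keys_superset) (auto simp: keys_add)
  also have "\<dots> = (\<Sum>p\<in>?S. Poly_Mapping.single (f p) (Poly_Mapping.lookup X p))
      + (\<Sum>p\<in>?S. Poly_Mapping.single (f p) (Poly_Mapping.lookup Y p))"
    by (simp add: lookup_add single_add sum.distrib)
  also have "\<dots> = push_keys f X + push_keys f Y"
    by (simp add: push_keys_superset[of ?S X f] push_keys_superset[of ?S Y f])
  finally show ?thesis .
qed

lemma push_keys_sum: "push_keys f (sum g A) = (\<Sum>x\<in>A. push_keys f (g x))"
  by (induction A rule: infinite_finite_induct) (auto simp: push_keys_add)

lemma lookup_push_keys_unique:
  assumes "\<And>p. p \<in> Poly_Mapping.keys X \<Longrightarrow> f p = f k \<Longrightarrow> p = k"
  shows "Poly_Mapping.lookup (push_keys f X) (f k) = Poly_Mapping.lookup X k"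
proof -
  have "Poly_Mapping.lookup (push_keys f X) (f k)
      = (\<Sum>p\<in>Poly_Mapping.keys X. Poly_Mapping.lookup X p when p = k)"
    unfolding push_keys_def lookup_sum lookup_single
    using assms by (intro sum.cong) (auto simp: when_def)
  also have "\<dots> = Poly_Mapping.lookup X k"
    by (simp add: when_def in_keys_iff)
  finally show ?thesis .
qed

lemma push_keys_hom_mult:
  fixes f :: "'a \<Rightarrow> 'b::monoid_add" and X Y :: "'a \<Rightarrow>\<^sub>0 'c::semiring_0"
  assumes "\<And>p q. f (op p q) = f p + f q"
  shows "push_keys f (\<Sum>p\<in>Poly_Mapping.keys X. \<Sum>q\<in>Poly_Mapping.keys Y.
      Poly_Mapping.single (op p q) (Poly_Mapping.lookup X p * Poly_Mapping.lookup Y q))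
    = push_keys f X * push_keys f Y"
proof -
  have "push_keys f X * push_keys f Y = (\<Sum>p\<in>Poly_Mapping.keys X. \<Sum>q\<in>Poly_Mapping.keys Y.
      Poly_Mapping.single (f p + f q) (Poly_Mapping.lookup X p * Poly_Mapping.lookup Y q))"
    by (simp add: push_keys_def sum_product mult_single)
  then show ?thesis by (simp add: push_keys_sum assms)
qed

abbreviation pm_scale :: "'c::semiring_0 \<Rightarrow> ('a \<Rightarrow>\<^sub>0 'c) \<Rightarrow> 'a \<Rightarrow>\<^sub>0 'c" where
  "pm_scale a P \<equiv> Poly_Mapping.map ((*) a) P"

lemma lookup_pm_scale: "Poly_Mapping.lookup (pm_scale a P) k = a * Poly_Mapping.lookup P k"
  by transfer (simp add: when_def)

lemma pm_scale_add: "pm_scale a (P + Q) = pm_scale a P + pm_scale a Q"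
  by (rule poly_mapping_eqI) (simp add: lookup_pm_scale lookup_add distrib_left)

lemma pm_scale_add_left: "pm_scale (a + b) P = pm_scale a P + pm_scale b P"
  by (rule poly_mapping_eqI) (simp add: lookup_pm_scale lookup_add distrib_right)

lemma pm_scale_zero [simp]: "pm_scale a 0 = 0"
  by (rule poly_mapping_eqI) (simp add: lookup_pm_scale)

lemma pm_scale_zero_left [simp]: "pm_scale 0 P = 0"
  by (rule poly_mapping_eqI) (simp add: lookup_pm_scale)

lemma pm_scale_sum: "pm_scale a (sum g A) = (\<Sum>x\<in>A. pm_scale a (g x))"
  by (induction A rule: infinite_finite_induct) (auto simp: pm_scale_add)

lemma keys_pm_scale_subset: "Poly_Mapping.keys (pm_scale a P) \<subseteq> Poly_Mapping.keys P"
  by (auto simp: in_keys_iff lookup_pm_scale)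

lemma push_keys_pm_scale: "push_keys f (pm_scale a X) = pm_scale a (push_keys f X)"
proof -
  have "push_keys f (pm_scale a X)
      = (\<Sum>p\<in>Poly_Mapping.keys X. Poly_Mapping.single (f p) (a * Poly_Mapping.lookup X p))"
    by (simp add: push_keys_superset[OF finite_keys keys_pm_scale_subset] lookup_pm_scale)
  also have "\<dots> = pm_scale a (push_keys f X)"
    by (simp add: push_keys_def pm_scale_sum)
  finally show ?thesis .
qed

definition pm_extend :: "('a \<Rightarrow> 'b \<Rightarrow>\<^sub>0 'c::semiring_0) \<Rightarrow> ('a \<Rightarrow>\<^sub>0 'c) \<Rightarrow> 'b \<Rightarrow>\<^sub>0 'c" where
  "pm_extend g X = (\<Sum>p\<in>Poly_Mapping.keys X. pm_scale (Poly_Mapping.lookup X p) (g p))"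

lemma pm_extend_superset:
  assumes "finite S" "Poly_Mapping.keys X \<subseteq> S"
  shows "pm_extend g X = (\<Sum>p\<in>S. pm_scale (Poly_Mapping.lookup X p) (g p))"
  unfolding pm_extend_def using assms
  by (intro sum.mono_neutral_left) (auto simp: in_keys_iff)

lemma pm_extend_zero [simp]: "pm_extend g 0 = 0"
  by (simp add: pm_extend_def)

lemma pm_extend_single [simp]: "pm_extend g (Poly_Mapping.single k c) = pm_scale c (g k)"
  by (simp add: pm_extend_def)

lemma pm_extend_add: "pm_extend g (X + Y) = pm_extend g X + pm_extend g Y"
proof -
  let ?S = "Poly_Mapping.keys X \<union> Poly_Mapping.keys Y"
  have "pm_extend g (X + Y) = (\<Sum>p\<in>?S. pm_scale (Poly_Mapping.lookup (X + Y) p) (g p))"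
    by (rule pm_extend_superset) (auto simp: keys_add)
  also have "\<dots> = (\<Sum>p\<in>?S. pm_scale (Poly_Mapping.lookup X p) (g p))
      + (\<Sum>p\<in>?S. pm_scale (Poly_Mapping.lookup Y p) (g p))"
    by (simp add: lookup_add pm_scale_add_left sum.distrib)
  also have "\<dots> = pm_extend g X + pm_extend g Y"
    by (simp add: pm_extend_superset[of ?S X g] pm_extend_superset[of ?S Y g])
  finally show ?thesis .
qed

lemma pm_extend_sum: "pm_extend g (sum h A) = (\<Sum>x\<in>A. pm_extend g (h x))"
  by (induction A rule: infinite_finite_induct) (auto simp: pm_extend_add)

lemma pm_extend_cong:
  "(\<And>p. p \<in> Poly_Mapping.keys X \<Longrightarrow> g p = h p) \<Longrightarrow> pm_extend g X = pm_extend h X"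
  by (simp add: pm_extend_def)

lemma pm_extend_push_keys: "pm_extend g (push_keys f X) = pm_extend (g \<circ> f) X"
  unfolding push_keys_def pm_extend_sum pm_extend_single by (simp add: pm_extend_def)

lemma push_keys_pm_extend: "push_keys f (pm_extend g X) = pm_extend (push_keys f \<circ> g) X"
  by (simp add: pm_extend_def push_keys_sum push_keys_pm_scale)

section \<open>Decompositions of plane trees\<close>

lemma in_listset_iff: "xs \<in> listset As \<longleftrightarrow> list_all2 (\<in>) xs As"
  by (induction As arbitrary: xs) (auto simp: set_Cons_def list_all2_Cons2)

lemma listset_Cons_image: "listset (A # As) = (\<lambda>(x, xs). x # xs) ` (A \<times> listset As)"
  by (auto simp: set_Cons_def)

lemma finite_listset: "(\<And>A. A \<in> set As \<Longrightarrow> finite A) \<Longrightarrow> finite (listset As)"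
  by (induction As) (auto simp: listset_Cons_image simp del: listset.simps(2))

lemma prod_list_sum_listset:
  fixes g :: "'a \<Rightarrow> 'r::comm_semiring_1"
  assumes "\<And>A. A \<in> set As \<Longrightarrow> finite A"
  shows "prod_list (map (sum g) As) = (\<Sum>xs\<in>listset As. prod_list (map g xs))"
  using assms
proof (induction As)
  case Nil
  then show ?case by simp
next
  case (Cons A As)
  have inj: "inj_on (\<lambda>(x, xs). x # xs) (A \<times> listset As)"
    by (auto simp: inj_on_def)
  have "prod_list (map (sum g) (A # As)) = sum g A * (\<Sum>xs\<in>listset As. prod_list (map g xs))"
    using Cons by simp
  also have "\<dots> = (\<Sum>(x, xs)\<in>A \<times> listset As. g x * prod_list (map g xs))"
    by (simp add: sum_product sum.cartesian_product)
  also have "\<dots> = (\<Sum>xs\<in>listset (A # As). prod_list (map g xs))"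
    unfolding listset_Cons_image by (subst sum.reindex[OF inj]) (simp add: case_prod_beta)
  finally show ?case .
qed

fun split_leaves :: "ptree list \<Rightarrow> 'a list \<Rightarrow> 'a list list" where
  "split_leaves [] ts = []"
| "split_leaves (d # ds) ts = take (nleaves d) ts # split_leaves ds (drop (nleaves d) ts)"

lemma split_leaves_lengths:
  "length ts = sum_list (map nleaves ds) \<Longrightarrow>
    list_all2 (\<lambda>d xs. length xs = nleaves d) ds (split_leaves ds ts)"
  by (induction ds arbitrary: ts) auto

lemma concat_split_leaves:
  "length ts = sum_list (map nleaves ds) \<Longrightarrow> concat (split_leaves ds ts) = ts"
  by (induction ds arbitrary: ts) auto

lemma split_leaves_concat:
  "list_all2 (\<lambda>d xs. length xs = nleaves d) ds tss \<Longrightarrow> split_leaves ds (concat tss) = tss"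
  by (induction ds arbitrary: tss) (auto simp: list_all2_Cons1)

lemma length_concat_leaves:
  "list_all2 (\<lambda>d xs. length xs = nleaves d) ds tss \<Longrightarrow>
    length (concat tss) = sum_list (map nleaves ds)"
  by (induction ds arbitrary: tss) (auto simp: list_all2_Cons1)

lemma graft_list_concat:
  "list_all2 (\<lambda>d xs. length xs = nleaves d) ds tss \<Longrightarrow>
    graft_list ds (concat tss) = map2 graft ds tss"
  by (induction ds arbitrary: tss) (auto simp: list_all2_Cons1)

lemma decomps_PLeaf: "decomps PLeaf = {(PLeaf, [PLeaf])}"
proof -
  have "(t0, ts) \<in> decomps PLeaf \<Longrightarrow> t0 = PLeaf \<and> ts = [PLeaf]" for t0 ts
    by (cases t0; cases ts) (auto simp: decomps_def)
  then show ?thesis by (auto simp: decomps_def)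
qed

definition combine_decomps :: "(ptree \<times> ptree list) list \<Rightarrow> ptree \<times> ptree list" where
  "combine_decomps ps = (PNode (map fst ps), concat (map snd ps))"

lemma decomps_lengths:
  "list_all2 (\<lambda>p c. p \<in> decomps c) ps cs \<Longrightarrow>
    list_all2 (\<lambda>d xs. length xs = nleaves d) (map fst ps) (map snd ps)"
  by (auto simp: list_all2_conv_all_nth decomps_def split: prod.splits)

lemma combine_decomps_mem:
  assumes "reduced (PNode cs)" and ps: "list_all2 (\<lambda>p c. p \<in> decomps c) ps cs"
  shows "combine_decomps ps \<in> decomps (PNode cs)"
proof -
  have fit: "list_all2 (\<lambda>d xs. length xs = nleaves d) (map fst ps) (map snd ps)"
    using ps by (rule decomps_lengths)
  have len: "length ps = length cs"
    using ps by (rule list_all2_lengthD)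
  have parts: "reduced (fst p) \<and> (\<forall>s\<in>set (snd p). reduced s)" if p: "p \<in> set ps" for p
  proof -
    obtain c where "(p, c) \<in> set (zip ps cs)"
      using in_set_impl_in_set_zip1[OF len p] by blast
    then show ?thesis
      using ps by (auto simp: list_all2_iff decomps_def)
  qed
  have "map2 graft (map fst ps) (map snd ps) = cs"
    using ps by (auto simp: list_all2_conv_all_nth decomps_def intro!: nth_equalityI)
  then have "graft_list (map fst ps) (concat (map snd ps)) = cs"
    by (simp add: graft_list_concat[OF fit])
  moreover have "reduced (PNode (map fst ps))"
    using assms len parts by auto
  moreover have "\<forall>s\<in>set (concat (map snd ps)). reduced s"
    using parts by auto
  ultimately show ?thesis
    using length_concat_leaves[OF fit] by (simp add: combine_decomps_def decomps_def)
qed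

lemma decomps_PNode_cases:
  assumes "(t0, ts) \<in> decomps (PNode cs)"
  shows "(t0, ts) = (PLeaf, [PNode cs])
    \<or> (\<exists>ps. list_all2 (\<lambda>p c. p \<in> decomps c) ps cs \<and> (t0, ts) = combine_decomps ps)"
proof (cases t0)
  case PLeaf
  then have "length ts = 1" "hd ts = PNode cs"
    using assms by (simp_all add: decomps_def)
  then have "ts = [PNode cs]"
    by (cases ts) auto
  then show ?thesis
    using PLeaf by simp
next
  case (PNode ds)
  have red: "reduced (PNode ds)" and rts: "\<forall>s\<in>set ts. reduced s"
    and len: "length ts = sum_list (map nleaves ds)" and gr: "graft_list ds ts = cs"
    using assms PNode by (auto simp: decomps_def)
  define tss where "tss = split_leaves ds ts"
  have fit: "list_all2 (\<lambda>d xs. length xs = nleaves d) ds tss"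
    unfolding tss_def using len by (rule split_leaves_lengths)
  then have lens: "length tss = length ds"
    by (simp add: list_all2_lengthD)
  have ts: "concat tss = ts"
    unfolding tss_def using len by (rule concat_split_leaves)
  have cs: "cs = map2 graft ds tss"
    using gr graft_list_concat[OF fit] ts by simp
  have "zip ds tss ! i \<in> decomps (cs ! i)" if i: "i < length ds" for i
  proof -
    have "\<forall>s\<in>set (tss ! i). reduced s"
      using rts ts i lens by (auto dest: nth_mem)
    moreover have "reduced (ds ! i)"
      using red i by auto
    moreover have "length (tss ! i) = nleaves (ds ! i)"
      using fit i by (simp add: list_all2_conv_all_nth)
    ultimately show ?thesis
      using i lens by (simp add: cs decomps_def)
  qed
  moreover have "length cs = length ds"
    using cs lens by simp
  ultimately have "list_all2 (\<lambda>p c. p \<in> decomps c) (zip ds tss) cs"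
    using lens by (simp add: list_all2_conv_all_nth)
  moreover have "(t0, ts) = combine_decomps (zip ds tss)"
    using PNode ts lens by (simp add: combine_decomps_def)
  ultimately show ?thesis by blast
qed

lemma combine_decomps_inj:
  assumes "list_all2 (\<lambda>p c. p \<in> decomps c) ps cs" "list_all2 (\<lambda>p c. p \<in> decomps c) qs cs'"
    and eq: "combine_decomps ps = combine_decomps qs"
  shows "ps = qs"
proof -
  have fst_eq: "map fst ps = map fst qs" and concat_eq: "concat (map snd ps) = concat (map snd qs)"
    using eq by (auto simp: combine_decomps_def)
  have "map snd ps = split_leaves (map fst ps) (concat (map snd ps))"
    using split_leaves_concat[OF decomps_lengths[OF assms(1)]] by simp
  also have "\<dots> = map snd qs"
    using split_leaves_concat[OF decomps_lengths[OF assms(2)]] fst_eq concat_eq by simp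
  finally show ?thesis
    using fst_eq by (rule pair_list_eqI[rotated])
qed

lemma decomps_PNode:
  assumes "reduced (PNode cs)"
  shows "decomps (PNode cs) = insert (PLeaf, [PNode cs]) (combine_decomps ` listset (map decomps cs))"
proof -
  have choices: "listset (map decomps cs) = {ps. list_all2 (\<lambda>p c. p \<in> decomps c) ps cs}"
    by (simp add: in_listset_iff list_all2_map2 set_eq_iff)
  have "(PLeaf, [PNode cs]) \<in> decomps (PNode cs)"
    using assms by (simp add: decomps_def)
  moreover have "d \<in> decomps (PNode cs)" if "d \<in> combine_decomps ` listset (map decomps cs)" for d
    using that combine_decomps_mem[OF assms] by (auto simp: choices)
  moreover have "d \<in> insert (PLeaf, [PNode cs]) (combine_decomps ` listset (map decomps cs))"
    if "d \<in> decomps (PNode cs)" for d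
    using that decomps_PNode_cases[of "fst d" "snd d" cs] by (auto simp: choices)
  ultimately show ?thesis by blast
qed

lemma finite_decomps: "reduced t \<Longrightarrow> finite (decomps t)"
proof (induction t)
  case PLeaf
  then show ?case by (simp add: decomps_PLeaf)
next
  case (PNode cs)
  then show ?case by (auto simp: decomps_PNode intro!: finite_imageI finite_listset)
qed

section \<open>The map sk and the coproducts\<close>

lemma single_zero_pair_one [simp]:
  "Poly_Mapping.single (0, 0) 1 = (1 :: ('a::monoid_add \<times> 'b::monoid_add) \<Rightarrow>\<^sub>0 'c::semiring_1)"
  by (simp flip: zero_prod_def)

lemma prod_list_single_pair:
  fixes k :: "'x \<Rightarrow> 'a::monoid_add" and l :: "'x \<Rightarrow> 'b::monoid_add"
  shows "prod_list (map (\<lambda>x. Poly_Mapping.single (k x, l x) 1) xs)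
    = (Poly_Mapping.single (sum_list (map k xs), sum_list (map l xs)) 1 :: _ \<Rightarrow>\<^sub>0 'c::semiring_1)"
  by (induction xs) (auto simp: mult_single)

lemma DeltaCK_forest_empty [simp]: "DeltaCK_forest {#} = 1"
  by (simp add: DeltaCK_forest_def)

lemma DeltaCK_forest_add: "DeltaCK_forest (A + B) = DeltaCK_forest A * DeltaCK_forest B"
  by (simp add: DeltaCK_forest_def)

lemma DeltaCK_forest_sum_list: "DeltaCK_forest (sum_list Fs) = prod_list (map DeltaCK_forest Fs)"
  by (induction Fs) (auto simp: DeltaCK_forest_add)

lemma Bplus_left_eq_push_keys: "Bplus_left n = push_keys (\<lambda>p. ({#Bplus n (fst p)#}, snd p))"
  unfolding Bplus_left_def push_keys_def ..

lemma DeltaCK_forest_Bplus: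
  "DeltaCK_forest {#Bplus n F#}
    = Poly_Mapping.single ({#}, {#Bplus n F#}) 1 + Bplus_left n (DeltaCK_forest F)"
  by (simp only: DeltaCK_forest_def image_mset_single prod_mset_singleton DeltaCK_tree.simps)

lemma sk_forest_Nil [simp]: "sk_forest [] = {#}"
  by (simp add: sk_forest_def)

lemma sk_forest_Cons [simp]: "sk_forest (t # w) = sk_tree t + sk_forest w"
  by (simp add: sk_forest_def)

lemma sk_forest_append [simp]: "sk_forest (u @ v) = sk_forest u + sk_forest v"
  by (simp add: sk_forest_def)

lemma sk_forest_concat: "sk_forest (concat ws) = sum_list (map sk_forest ws)"
  by (induction ws) auto

lemma sk_forest_forest_of [simp]: "sk_forest (forest_of t) = sk_tree t"
  by (cases t) auto

lemma sk_forest_concat_forest_of [simp]: "sk_forest (concat (map forest_of ts)) = sk_forest ts"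
  by (induction ts) auto

lemma sk_tree_eq_empty_iff: "sk_tree t = {#} \<longleftrightarrow> t = PLeaf"
  by (cases t) auto

lemma sk_forest_eq_empty_iff: "pforest w \<Longrightarrow> sk_forest w = {#} \<longleftrightarrow> w = []"
  by (cases w) (auto simp: pforest_def sk_tree_eq_empty_iff)

lemma sk_eq_push_keys: "sk = push_keys sk_forest"
  by (auto simp: sk_def push_keys_def fun_eq_iff)

lemma sk2_eq_push_keys: "sk2 = push_keys (\<lambda>p. (sk_forest (fst p), sk_forest (snd p)))"
  by (auto simp: sk2_def push_keys_def fun_eq_iff)

lemma DeltaCK_eq_pm_extend: "DeltaCK = pm_extend DeltaCK_forest"
  by (simp add: DeltaCK_def pm_extend_def fun_eq_iff)

lemma DeltaPT_eq_pm_extend: "DeltaPT = pm_extend DeltaPT_forest"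
  by (simp add: DeltaPT_def pm_extend_def fun_eq_iff)

lemma sk2_mulPT2: "sk2 (mulPT2 X Y) = sk2 X * sk2 Y"
  unfolding mulPT2_def sk2_eq_push_keys by (rule push_keys_hom_mult) simp

lemma sk2_DeltaPT_tree:
  "sk2 (DeltaPT_tree t) = (\<Sum>d\<in>decomps t. Poly_Mapping.single (sk_tree (fst d), sk_forest (snd d)) 1)"
  by (simp add: sk2_eq_push_keys DeltaPT_tree_def push_keys_sum)

lemma DeltaCK_forest_sk_tree:
  "reduced t \<Longrightarrow> DeltaCK_forest (sk_tree t) = sk2 (DeltaPT_tree t)"
proof (induction t)
  case PLeaf
  show ?case by (simp add: sk2_DeltaPT_tree decomps_PLeaf)
next
  case (PNode cs)
  define summand where
    "summand = (\<lambda>d. Poly_Mapping.single (sk_tree (fst d), sk_forest (snd d)) (1::complex))"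
  define n where "n = length cs - 1"
  let ?choices = "listset (map decomps cs)"
  have fin: "\<And>A. A \<in> set (map decomps cs) \<Longrightarrow> finite A"
    using PNode.prems by (auto intro: finite_decomps)
  have finite_choices: "finite ?choices"
    using fin by (rule finite_listset)
  have inj: "inj_on combine_decomps ?choices"
    by (auto intro!: inj_onI combine_decomps_inj simp: in_listset_iff list_all2_map2)
  have trivial_new: "(PLeaf, [PNode cs]) \<notin> combine_decomps ` ?choices"
    by (auto simp: combine_decomps_def)
  \<comment> \<open>Grafting keeps the arity of the root, so \<open>sk\<close> of the combined \<open>t\<^sub>0\<close> is again decorated \<open>n\<close>.\<close>
  have combined: "summand (combine_decomps ps) = Bplus_left n (prod_list (map summand ps))"
    if "ps \<in> ?choices" for ps
  proof -
    have "length ps = length cs"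
      using that by (auto simp: in_listset_iff dest: list_all2_lengthD)
    then show ?thesis
      by (simp add: summand_def combine_decomps_def n_def Bplus_left_eq_push_keys
          prod_list_single_pair sk_forest_concat o_def)
  qed
  have "sk2 (DeltaPT_tree (PNode cs)) = sum summand (decomps (PNode cs))"
    by (simp add: sk2_DeltaPT_tree summand_def)
  also have "\<dots> = summand (PLeaf, [PNode cs]) + (\<Sum>ps\<in>?choices. summand (combine_decomps ps))"
    using finite_choices trivial_new
    by (simp add: decomps_PNode[OF PNode.prems] sum.reindex[OF inj])
  also have "(\<Sum>ps\<in>?choices. summand (combine_decomps ps))
      = Bplus_left n (\<Sum>ps\<in>?choices. prod_list (map summand ps))"
    by (simp add: combined Bplus_left_eq_push_keys push_keys_sum)
  also have "(\<Sum>ps\<in>?choices. prod_list (map summand ps)) = prod_list (map (sum summand \<circ> decomps) cs)"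
    using prod_list_sum_listset[of "map decomps cs" summand, OF fin] by (simp add: o_def)
  also have "\<dots> = DeltaCK_forest (sum_list (map sk_tree cs))"
    using PNode by (auto simp: DeltaCK_forest_sum_list sk2_DeltaPT_tree summand_def
        intro!: arg_cong[where f = prod_list])
  finally show ?case
    by (simp add: DeltaCK_forest_Bplus n_def summand_def)
qed

lemma DeltaCK_forest_sk_forest:
  "(\<And>t. t \<in> set w \<Longrightarrow> reduced t) \<Longrightarrow> DeltaCK_forest (sk_forest w) = sk2 (DeltaPT_forest w)"
proof (induction w)
  case Nil
  then show ?case by (simp add: DeltaPT_forest_def sk2_eq_push_keys)
next
  case (Cons t w)
  then show ?case
    by (simp add: DeltaPT_forest_def DeltaCK_forest_add DeltaCK_forest_sk_tree sk2_mulPT2)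
qed

theorem mainTheorem8:
  shows "sk (Poly_Mapping.single [] 1) = 1
    \<and> (\<forall>x\<in>HPT. \<forall>y\<in>HPT. sk (mulPT x y) = sk x * sk y)
    \<and> (\<forall>x\<in>HPT. DeltaCK (sk x) = sk2 (DeltaPT x))
    \<and> (\<forall>x\<in>HPT. epsCK (sk x) = epsPT x)"
proof (intro conjI ballI)
  show "sk (Poly_Mapping.single [] 1) = 1"
    by (simp add: sk_eq_push_keys)
next
  fix x y
  show "sk (mulPT x y) = sk x * sk y"
    unfolding mulPT_def sk_eq_push_keys by (rule push_keys_hom_mult) simp
next
  fix x assume x: "x \<in> HPT"
  have "DeltaCK (sk x) = pm_extend (DeltaCK_forest \<circ> sk_forest) x"
    by (simp add: DeltaCK_eq_pm_extend sk_eq_push_keys pm_extend_push_keys)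
  also have "\<dots> = pm_extend (sk2 \<circ> DeltaPT_forest) x"
    using x by (intro pm_extend_cong) (auto simp: HPT_def pforest_def DeltaCK_forest_sk_forest)
  also have "\<dots> = sk2 (DeltaPT x)"
    by (simp add: DeltaPT_eq_pm_extend sk2_eq_push_keys push_keys_pm_extend)
  finally show "DeltaCK (sk x) = sk2 (DeltaPT x)" .
next
  fix x assume x: "x \<in> HPT"
  have "Poly_Mapping.lookup (push_keys sk_forest x) (sk_forest []) = Poly_Mapping.lookup x []"
    using x by (intro lookup_push_keys_unique) (auto simp: HPT_def sk_forest_eq_empty_iff)
  then show "epsCK (sk x) = epsPT x"
    by (simp add: epsCK_def epsPT_def sk_eq_push_keys)
qed

end
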